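(* Let $X$ be a fibrewise locally equiconnected space over $B$ and $e:X\to X$ a fibrewise map with $e\circ e=e$. Then $(X,e(X))$ is a closed fibrewise cofibred pair.
   Context: A fibrewise space over $B$ is a space $X$ with $p_X:X\to B$; fibrewise maps satisfy $p_Y\circ f=p_X$. A fibrewise cofibration is a fibrewise map with the homotopy extension property with respect to fibrewise maps and fibrewise homotopies (homotopies $H$ with $p(H(x,t))=p(x)$); closed if also a closed embedding. $(X,A)$ is a closed fibrewise cofibred pair if $A\hookrightarrow X$ is a closed fibrewise cofibration. $X$ is fibrewise locally equiconnected if the diagonal $X\to X\times_BX=\{(x,y):p_X(x)=p_X(y)\}$ is a closed fibrewise cofibration. *)

theory Defs
  imports "HOL-Analysis.Analysis"
begin

definition fibrewise_map ::
  "'a topology \<Rightarrow> ('a \<Rightarrow> 'b) \<Rightarrow> 'c topology \<Rightarrow> ('c \<Rightarrow> 'b) \<Rightarrow> ('a \<Rightarrow> 'c) \<Rightarrow> bool" where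
  "fibrewise_map X p Y q f \<longleftrightarrow>
     continuous_map X Y f \<and> (\<forall>x\<in>topspace X. q (f x) = p x)"

definition fibrewise_homotopy ::
  "'a topology \<Rightarrow> ('a \<Rightarrow> 'b) \<Rightarrow> 'c topology \<Rightarrow> ('c \<Rightarrow> 'b) \<Rightarrow> ('a \<times> real \<Rightarrow> 'c) \<Rightarrow> bool" where
  "fibrewise_homotopy X p Y q H \<longleftrightarrow>
     continuous_map (prod_topology X (top_of_set {0..1})) Y H \<and>
     (\<forall>x\<in>topspace X. \<forall>t\<in>{0..1}. q (H (x, t)) = p x)"

text \<open>Fibrewise cofibration (fibrewise homotopy extension property) with respect to all
  fibrewise spaces over B whose points live in the type 'c (given as first argument).\<close>

definition fibrewise_cofibration ::
  "'c itself \<Rightarrow> 'b topology \<Rightarrow> 'a topology \<Rightarrow> ('a \<Rightarrow> 'b) \<Rightarrow> 'x topology \<Rightarrow> ('x \<Rightarrow> 'b)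
     \<Rightarrow> ('a \<Rightarrow> 'x) \<Rightarrow> bool" where
  "fibrewise_cofibration T B A pA X pX i \<longleftrightarrow>
     fibrewise_map A pA X pX i \<and>
     (\<forall>(Y::'c topology) q f H.
        continuous_map Y B q \<and> fibrewise_map X pX Y q f \<and> fibrewise_homotopy A pA Y q H \<and>
        (\<forall>a\<in>topspace A. H (a, 0) = f (i a)) \<longrightarrow>
        (\<exists>K. fibrewise_homotopy X pX Y q K \<and>
             (\<forall>x\<in>topspace X. K (x, 0) = f x) \<and>
             (\<forall>a\<in>topspace A. \<forall>t\<in>{0..1}. K (i a, t) = H (a, t))))"

definition closed_fibrewise_cofibration ::
  "'c itself \<Rightarrow> 'b topology \<Rightarrow> 'a topology \<Rightarrow> ('a \<Rightarrow> 'b) \<Rightarrow> 'x topology \<Rightarrow> ('x \<Rightarrow> 'b)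
     \<Rightarrow> ('a \<Rightarrow> 'x) \<Rightarrow> bool" where
  "closed_fibrewise_cofibration T B A pA X pX i \<longleftrightarrow>
     fibrewise_cofibration T B A pA X pX i \<and> embedding_map A X i \<and>
     closedin X (i ` topspace A)"

definition fibre_product :: "'a topology \<Rightarrow> ('a \<Rightarrow> 'b) \<Rightarrow> ('a \<times> 'a) topology" where
  "fibre_product X p = subtopology (prod_topology X X)
     {(x, y). x \<in> topspace X \<and> y \<in> topspace X \<and> p x = p y}"

text \<open>The test spaces are taken with points in (('a \<times> 'a) \<times> real), which contains
  (copies of) all subspaces of (X \<times>_B X) \<times> I, in particular the mapping cylinder.\<close>

definition fibrewise_LEC :: "'b topology \<Rightarrow> 'a topology \<Rightarrow> ('a \<Rightarrow> 'b) \<Rightarrow> bool" where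
  "fibrewise_LEC B X p \<longleftrightarrow>
     closed_fibrewise_cofibration TYPE(('a \<times> 'a) \<times> real) B X p
       (fibre_product X p) (\<lambda>z. p (fst z)) (\<lambda>x. (x, x))"

end

theory Submission
  imports Defs
begin

text \<open>
  Applying the fibrewise homotopy extension property of the diagonal to the inclusion of the
  mapping cylinder retracts (X \<times>_B X) \<times> I onto it, which yields a fibrewise Strom
  structure (u, D) for the diagonal. Following D(w, -) from w = (x, y) until it reaches the
  diagonal, first on the x-coordinate and then backwards on the y-coordinate, gives fibrewise paths
  from x to y near the diagonal, depending continuously on (x, y). Along the path from x to e x
  one deforms X onto e(X), arriving at a time that vanishes on e(X); extending a homotopy from
  e(X) is then done by running the given map along this deformation and continuing with the
  homotopy at e x. Closedness of e(X) holds because it is the preimage of the diagonal under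
  x \<mapsto> (x, e x).
\<close>

lemma continuous_map_Sup_over_compact_space:
  fixes F :: "'a \<times> 'c \<Rightarrow> real"
  assumes F: "continuous_map (prod_topology W S) euclideanreal F"
    and S: "compact_space S" "topspace S \<noteq> {}"
  shows "continuous_map W euclideanreal (\<lambda>w. Sup ((\<lambda>s. F (w, s)) ` topspace S))"
proof -
  let ?g = "\<lambda>w. Sup ((\<lambda>s. F (w, s)) ` topspace S)"
  let ?Z = "topspace (prod_topology W S)"
  have attains: "\<exists>s\<in>topspace S. (\<forall>s'\<in>topspace S. F (w, s') \<le> F (w, s)) \<and> ?g w = F (w, s)"
    if w: "w \<in> topspace W" for w
  proof -
    have "continuous_map S euclideanreal (\<lambda>s. F (w, s))"
      using continuous_map_compose[of S _ "\<lambda>s. (w, s)", OF _ F] w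
      by (simp add: continuous_map_pairwise o_def)
    then have "compact ((\<lambda>s. F (w, s)) ` topspace S)"
      using image_compactin[of S "topspace S" euclideanreal] S(1) by (simp add: compact_space_def)
    then obtain s where s: "s \<in> topspace S" "\<forall>s'\<in>topspace S. F (w, s') \<le> F (w, s)"
      using compact_attains_sup[of "(\<lambda>s. F (w, s)) ` topspace S"] S(2) by auto
    moreover have "?g w = F (w, s)"
      by (rule cSup_eq_maximum) (use s in auto)
    ultimately show ?thesis by blast
  qed
  have above: "{w \<in> topspace W. a < ?g w} = fst ` {z \<in> ?Z. F z \<in> {a<..}}" for a
    using attains by (fastforce intro: image_eqI[where x = "(_, _)"])
  have below: "{w \<in> topspace W. ?g w < a} = topspace W - fst ` {z \<in> ?Z. F z \<in> {a..}}" for a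
    using attains by (fastforce intro: image_eqI[where x = "(_, _)"])
  show ?thesis
    unfolding continuous_map_upper_lower_semicontinuous_lt
  proof (intro allI conjI)
    fix a
    show "openin W {w \<in> topspace W. a < ?g w}"
      unfolding above
      by (rule open_map_fst[of W S, unfolded open_map_def, rule_format])
        (use openin_continuous_map_preimage[OF F, of "{a<..}"] in auto)
    show "openin W {w \<in> topspace W. ?g w < a}"
      unfolding below
      by (intro openin_diff openin_topspace closed_map_fst[OF S(1), unfolded closed_map_def, rule_format])
        (use closedin_continuous_map_preimage[OF F, of "{a..}"] in auto)
  qed
qed

text \<open>The test type 'w \<times> real is the one in which the mapping cylinder
  W \<times> {0} \<union> i(A) \<times> [0,1] lives.\<close>

lemma fibrewise_cofibration_cylinder_retraction:
  fixes W :: "'w topology" and i :: "'a \<Rightarrow> 'w"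
  assumes cof: "fibrewise_cofibration TYPE('w \<times> real) B A pA W pW i"
    and pW: "continuous_map W B pW"
  obtains K where
    "continuous_map (prod_topology W (top_of_set {0..1})) (prod_topology W (top_of_set {0..1::real})) K"
    "\<And>w t. \<lbrakk>w \<in> topspace W; t \<in> {0..1}; 0 < snd (K (w, t))\<rbrakk> \<Longrightarrow> fst (K (w, t)) \<in> i ` topspace A"
    "\<And>w t. \<lbrakk>w \<in> topspace W; t \<in> {0..1}\<rbrakk> \<Longrightarrow> pW (fst (K (w, t))) = pW w"
    "\<And>w. w \<in> topspace W \<Longrightarrow> K (w, 0) = (w, 0)"
    "\<And>a t. \<lbrakk>a \<in> topspace A; t \<in> {0..1}\<rbrakk> \<Longrightarrow> K (i a, t) = (i a, t)"
proof -
  define M where "M = topspace W \<times> {0::real} \<union> i ` topspace A \<times> {0..1}"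
  define Y where "Y = subtopology (prod_topology W (top_of_set {0..1})) M"
  have i: "continuous_map A W i" "\<And>a. a \<in> topspace A \<Longrightarrow> pW (i a) = pA a"
    using cof by (auto simp: fibrewise_cofibration_def fibrewise_map_def)
  have "continuous_map Y B (pW \<circ> fst)"
    unfolding Y_def
    by (intro continuous_map_from_subtopology continuous_map_compose[OF continuous_map_fst pW])
  moreover have "fibrewise_map W pW Y (pW \<circ> fst) (\<lambda>w. (w, 0))"
    by (auto simp: fibrewise_map_def Y_def M_def continuous_map_in_subtopology continuous_map_pairwise o_def)
  moreover have "fibrewise_homotopy A pA Y (pW \<circ> fst) (\<lambda>(a, t). (i a, t))"
  proof -
    have "continuous_map (prod_topology A (top_of_set {0..1})) (prod_topology W (top_of_set {0..1}))
        (\<lambda>(a, t). (i a, t))"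
      using continuous_map_compose[OF continuous_map_fst i(1)]
      by (simp add: continuous_map_pairwise o_def case_prod_unfold continuous_map_snd)
    then show ?thesis
      using i(2) by (auto simp: fibrewise_homotopy_def Y_def M_def continuous_map_in_subtopology)
  qed
  ultimately obtain K where K: "fibrewise_homotopy W pW Y (pW \<circ> fst) K"
    "\<forall>w\<in>topspace W. K (w, 0) = (w, 0)" "\<forall>a\<in>topspace A. \<forall>t\<in>{0..1}. K (i a, t) = (i a, t)"
    using cof[unfolded fibrewise_cofibration_def, THEN conjunct2, rule_format,
        of Y "pW \<circ> fst" "\<lambda>w. (w, 0)" "\<lambda>(a, t). (i a, t)"]
    by auto
  have cK: "continuous_map (prod_topology W (top_of_set {0..1})) Y K"
    using K(1) by (simp add: fibrewise_homotopy_def)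
  show thesis
  proof
    show "continuous_map (prod_topology W (top_of_set {0..1})) (prod_topology W (top_of_set {0..1::real})) K"
      using cK unfolding Y_def by (rule continuous_map_into_fulltopology)
    show "fst (K (w, t)) \<in> i ` topspace A" if "w \<in> topspace W" "t \<in> {0..1}" "0 < snd (K (w, t))" for w t
      using continuous_map_image_subset_topspace[OF cK] that by (force simp: Y_def M_def)
    show "pW (fst (K (w, t))) = pW w" if "w \<in> topspace W" "t \<in> {0..1}" for w t
      using K(1) that by (simp add: fibrewise_homotopy_def)
  qed (use K in auto)
qed

lemma closedin_path_start:
  assumes g: "continuous_map (top_of_set {0..1::real}) W g" and C: "closedin W C"
    and "\<And>s. s \<in> {0<..1} \<Longrightarrow> g s \<in> C"
  shows "g 0 \<in> C"
proof -
  have "closed {s \<in> {0..1}. g s \<in> C}"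
    using closedin_continuous_map_preimage[OF g C] by (simp add: closedin_closed_trans)
  moreover have "{0<..1} \<subseteq> {s \<in> {0..1}. g s \<in> C}"
    using assms(3) by auto
  ultimately have "closure {0<..1::real} \<subseteq> {s \<in> {0..1}. g s \<in> C}"
    by (rule closure_minimal[rotated])
  then show ?thesis by force
qed

text \<open>Fibrewise version of a Strom structure for the pair (W, C); unlike the classical
  notion, D is not required to fix C.\<close>

definition fibrewise_strom_structure ::
  "'w topology \<Rightarrow> ('w \<Rightarrow> 'b) \<Rightarrow> 'w set \<Rightarrow> ('w \<Rightarrow> real) \<Rightarrow> ('w \<times> real \<Rightarrow> 'w) \<Rightarrow> bool" where
  "fibrewise_strom_structure W p C u D \<longleftrightarrow>
     C \<subseteq> topspace W \<and> continuous_map W euclideanreal u \<and> fibrewise_homotopy W p W p D \<and>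
     (\<forall>w\<in>topspace W. 0 \<le> u w \<and> (u w = 0 \<longleftrightarrow> w \<in> C) \<and> D (w, 0) = w \<and>
        (\<forall>t\<in>{0..1}. u w < t \<longrightarrow> D (w, t) \<in> C))"

lemma closed_fibrewise_cofibration_strom_structure:
  fixes W :: "'w topology" and i :: "'a \<Rightarrow> 'w"
  assumes cof: "fibrewise_cofibration TYPE('w \<times> real) B A pA W pW i"
    and pW: "continuous_map W B pW"
    and closed: "closedin W (i ` topspace A)"
  obtains u D where "fibrewise_strom_structure W pW (i ` topspace A) u D"
proof -
  let ?C = "i ` topspace A"
  obtain K where cK: "continuous_map (prod_topology W (top_of_set {0..1})) (prod_topology W (top_of_set {0..1::real})) K"
    and K_C: "\<And>w t. \<lbrakk>w \<in> topspace W; t \<in> {0..1}; 0 < snd (K (w, t))\<rbrakk> \<Longrightarrow> fst (K (w, t)) \<in> ?C"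
    and K_fibre: "\<And>w t. \<lbrakk>w \<in> topspace W; t \<in> {0..1}\<rbrakk> \<Longrightarrow> pW (fst (K (w, t))) = pW w"
    and K_0: "\<And>w. w \<in> topspace W \<Longrightarrow> K (w, 0) = (w, 0)"
    and K_C_fixed: "\<And>a t. \<lbrakk>a \<in> topspace A; t \<in> {0..1}\<rbrakk> \<Longrightarrow> K (i a, t) = (i a, t)"
    using fibrewise_cofibration_cylinder_retraction[OF cof pW] by blast
  define D where "D = fst \<circ> K"
  \<comment> \<open>After time u w the retraction K(w, -) has left the bottom W \<times> {0} of the cylinder.\<close>
  define u where "u = (\<lambda>w. Sup ((\<lambda>s. s - snd (K (w, s))) ` {0..1}))"
  have cD: "continuous_map (prod_topology W (top_of_set {0..1})) W D"
    unfolding D_def using cK by (rule continuous_map_compose) (rule continuous_map_fst)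
  have K_snd: "snd (K (w, t)) \<in> {0..1}" if "w \<in> topspace W" "t \<in> {0..1}" for w t
    using continuous_map_image_subset_topspace[OF cK] that by force
  have cu: "continuous_map W euclideanreal u"
  proof -
    have "continuous_map (prod_topology W (top_of_set {0..1})) euclideanreal (\<lambda>z. snd z - snd (K z))"
      using continuous_map_compose[OF cK continuous_map_snd]
      by (intro continuous_map_diff continuous_map_into_fulltopology[OF continuous_map_snd])
        (simp add: o_def continuous_map_into_fulltopology)
    from continuous_map_Sup_over_compact_space[OF this] show ?thesis
      by (simp add: u_def compact_space_subtopology)
  qed
  have u_ge: "t - snd (K (w, t)) \<le> u w" if "w \<in> topspace W" "t \<in> {0..1}" for w t
    unfolding u_def
    by (rule cSup_upper) (use that K_snd[OF that(1)] in \<open>force intro: bdd_aboveI[where M = 1]\<close>)+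
  have D_C: "D (w, t) \<in> ?C" if "w \<in> topspace W" "t \<in> {0..1}" "u w < t" for w t
    using u_ge[OF that(1,2)] that K_C by (force simp: D_def)
  have u_C: "u c = 0" if "c \<in> ?C" for c
  proof -
    have "(\<lambda>s. s - snd (K (c, s))) ` {0..1} = {0}"
      using that K_C_fixed by force
    then show ?thesis by (simp add: u_def)
  qed
  have zero_u_C: "w \<in> ?C" if w: "w \<in> topspace W" and "u w = 0" for w
  proof -
    have "continuous_map (top_of_set {0..1}) W (\<lambda>s. D (w, s))"
      using continuous_map_compose[of _ _ "\<lambda>s. (w, s)", OF _ cD] w
      by (simp add: continuous_map_pairwise o_def)
    then have "D (w, 0) \<in> ?C"
      by (rule closedin_path_start[OF _ closed]) (use D_C w \<open>u w = 0\<close> in auto)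
    with K_0 w show ?thesis by (simp add: D_def)
  qed
  have "fibrewise_strom_structure W pW ?C u D"
    unfolding fibrewise_strom_structure_def fibrewise_homotopy_def
  proof (intro conjI ballI impI)
    show "?C \<subseteq> topspace W"
      using cof by (auto simp: fibrewise_cofibration_def fibrewise_map_def dest: continuous_map_image_subset_topspace)
    fix w assume w: "w \<in> topspace W"
    show "0 \<le> u w"
      using u_ge[OF w, of 0] K_0[OF w] by simp
    show "D (w, 0) = w"
      using K_0[OF w] by (simp add: D_def)
    show "u w = 0 \<longleftrightarrow> w \<in> ?C"
      using zero_u_C[OF w] u_C by blast
    show "D (w, t) \<in> ?C" if "t \<in> {0..1}" "u w < t" for t
      using D_C w that by blast
    show "pW (D (w, t)) = pW w" if "t \<in> {0..1}" for t
      using K_fibre w that by (simp add: D_def)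
  qed (use cD cu in auto)
  then show thesis ..
qed

lemma topspace_fibre_product:
  "topspace (fibre_product X p) = {(x, y). x \<in> topspace X \<and> y \<in> topspace X \<and> p x = p y}"
  by (auto simp: fibre_product_def)

lemma continuous_map_fibre_product_fst: "continuous_map (fibre_product X p) X fst"
  and continuous_map_fibre_product_snd: "continuous_map (fibre_product X p) X snd"
  by (simp_all add: fibre_product_def continuous_map_from_subtopology continuous_map_fst continuous_map_snd)

lemma continuous_map_graph_fibre_product:
  assumes "fibrewise_map X p X p e"
  shows "continuous_map X (fibre_product X p) (\<lambda>x. (x, e x))"
  using assms continuous_map_image_subset_topspace[of X X e]
  by (auto simp: fibrewise_map_def fibre_product_def continuous_map_in_subtopology continuous_map_pairwise o_def)

lemma continuous_map_there_and_back:
  assumes s: "continuous_map W euclideanreal s" "\<And>w. w \<in> topspace W \<Longrightarrow> 0 \<le> s w"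
    and a: "continuous_map (prod_topology W (top_of_set {0..1})) X a"
    and b: "continuous_map (prod_topology W (top_of_set {0..1})) X b"
    and ab: "\<And>w. \<lbrakk>w \<in> topspace W; s w \<le> 1\<rbrakk> \<Longrightarrow> a (w, s w) = b (w, s w)"
  shows "continuous_map (prod_topology W (top_of_set {0..1})) X
    (\<lambda>(w, t). if t \<le> s w then a (w, t) else b (w, max 0 (min 1 (2 * s w - t))))"
proof -
  let ?Z = "prod_topology W (top_of_set {0..1::real})"
  let ?back = "\<lambda>z. (fst z, max 0 (min 1 (2 * s (fst z) - snd z)))"
  have cs: "continuous_map ?Z euclideanreal (\<lambda>z. s (fst z))"
    using continuous_map_compose[OF continuous_map_fst s(1)] by (simp add: o_def)
  have "continuous_map ?Z euclideanreal (\<lambda>z. max 0 (min 1 (2 * s (fst z) - snd z)))"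
    using cs by (intro continuous_intros continuous_map_into_fulltopology[OF continuous_map_snd])
  then have "continuous_map ?Z ?Z ?back"
    by (simp add: continuous_map_pairwise o_def continuous_map_in_subtopology Pi_iff continuous_map_fst)
  from continuous_map_compose[OF this b]
  have c_back: "continuous_map ?Z X (\<lambda>z. b (?back z))"
    by (simp add: o_def)
  have "continuous_map ?Z X (\<lambda>z. if snd z \<le> s (fst z) then a z else b (?back z))"
  proof (rule continuous_map_cases_le[OF continuous_map_into_fulltopology[OF continuous_map_snd] cs])
    fix z assume "z \<in> topspace ?Z" "snd z = s (fst z)"
    then obtain w where "z = (w, s w)" "w \<in> topspace W" "s w \<le> 1"
      by (cases z) auto
    with s(2) show "a z = b (?back z)"
      using ab by simp
  qed (use a c_back in \<open>auto intro: continuous_map_from_subtopology\<close>)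
  then show ?thesis by (rule continuous_map_eq) auto
qed

definition fibrewise_equiconnecting ::
  "'a topology \<Rightarrow> ('a \<Rightarrow> 'b) \<Rightarrow> ('a \<times> 'a \<Rightarrow> real) \<Rightarrow> (('a \<times> 'a) \<times> real \<Rightarrow> 'a) \<Rightarrow> bool" where
  "fibrewise_equiconnecting X p \<tau> \<gamma> \<longleftrightarrow>
     continuous_map (fibre_product X p) euclideanreal \<tau> \<and>
     fibrewise_homotopy (fibre_product X p) (\<lambda>w. p (fst w)) X p \<gamma> \<and>
     (\<forall>x\<in>topspace X. \<tau> (x, x) = 0) \<and>
     (\<forall>w\<in>topspace (fibre_product X p). 0 \<le> \<tau> w \<and> \<gamma> (w, 0) = fst w \<and>
        (\<forall>t\<in>{0..1}. \<tau> w \<le> t \<longrightarrow> \<gamma> (w, t) = snd w))"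

lemma fibrewise_strom_structure_diagonal_equiconnecting:
  assumes strom: "fibrewise_strom_structure (fibre_product X p) (\<lambda>w. p (fst w)) ((\<lambda>x. (x, x)) ` topspace X) u D"
  obtains \<tau> \<gamma> where "fibrewise_equiconnecting X p \<tau> \<gamma>"
proof -
  let ?W = "fibre_product X p" and ?I = "top_of_set {0..1::real}"
  have cu: "continuous_map ?W euclideanreal u"
    and D: "fibrewise_homotopy ?W (\<lambda>w. p (fst w)) ?W (\<lambda>w. p (fst w)) D"
    and u_0: "\<And>w. w \<in> topspace ?W \<Longrightarrow> 0 \<le> u w \<and> (u w = 0 \<longleftrightarrow> fst w = snd w)"
    and D_0: "\<And>w. w \<in> topspace ?W \<Longrightarrow> D (w, 0) = w"
    and D_diag: "\<And>w t. \<lbrakk>w \<in> topspace ?W; t \<in> {0..1}; u w < t\<rbrakk> \<Longrightarrow> D (w, t) \<in> (\<lambda>x. (x, x)) ` topspace X"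
    using strom unfolding fibrewise_strom_structure_def by (auto simp: topspace_fibre_product)
  have cD: "continuous_map (prod_topology ?W ?I) ?W D"
    using D by (simp add: fibrewise_homotopy_def)
  have D_W: "D (w, t) \<in> topspace ?W" if "w \<in> topspace ?W" "t \<in> {0..1}" for w t
    using continuous_map_image_subset_topspace[OF cD] that by force
  \<comment> \<open>At time 2 u w the path D(w, -) is on the diagonal, where its two coordinates meet.\<close>
  define \<gamma> where "\<gamma> = (\<lambda>(w, t). if t \<le> 2 * u w then fst (D (w, t))
    else snd (D (w, max 0 (min 1 (2 * (2 * u w) - t)))))"
  have c\<gamma>: "continuous_map (prod_topology ?W ?I) X \<gamma>"
    unfolding \<gamma>_def
  proof (rule continuous_map_there_and_back)
    show "continuous_map ?W euclideanreal (\<lambda>w. 2 * u w)"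
      using cu by (rule continuous_map_real_mult_left)
    show "continuous_map (prod_topology ?W ?I) X (\<lambda>z. fst (D z))"
      using continuous_map_compose[OF cD continuous_map_fibre_product_fst] by (simp add: o_def)
    show "continuous_map (prod_topology ?W ?I) X (\<lambda>z. snd (D z))"
      using continuous_map_compose[OF cD continuous_map_fibre_product_snd] by (simp add: o_def)
    show "fst (D (w, 2 * u w)) = snd (D (w, 2 * u w))" if w: "w \<in> topspace ?W" and "2 * u w \<le> 1" for w
    proof (cases "u w = 0")
      case True
      with u_0[OF w] D_0[OF w] show ?thesis by simp
    next
      case False
      with that u_0[OF w] D_diag[of w "2 * u w"] show ?thesis by auto
    qed
  qed (use u_0 in simp)
  have "fibrewise_equiconnecting X p (\<lambda>w. 4 * u w) \<gamma>"
    unfolding fibrewise_equiconnecting_def fibrewise_homotopy_def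
  proof (intro conjI ballI impI c\<gamma>)
    show "continuous_map ?W euclideanreal (\<lambda>w. 4 * u w)"
      using cu by (rule continuous_map_real_mult_left)
    show "4 * u (x, x) = 0" if "x \<in> topspace X" for x
      using u_0[of "(x, x)"] that by (simp add: topspace_fibre_product)
    fix w assume w: "w \<in> topspace ?W"
    show "0 \<le> 4 * u w" using u_0[OF w] by simp
    show "\<gamma> (w, 0) = fst w" using u_0[OF w] D_0[OF w] by (simp add: \<gamma>_def)
    show "\<gamma> (w, t) = snd w" if "t \<in> {0..1}" "4 * u w \<le> t" for t
      using that u_0[OF w] D_0[OF w] by (auto simp: \<gamma>_def)
    show "p (\<gamma> (w, t)) = p (fst w)" if "t \<in> {0..1}" for t
    proof -
      have "p (fst (D (w, s))) = p (fst w) \<and> p (snd (D (w, s))) = p (fst w)" if "s \<in> {0..1}" for s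
      proof -
        have "p (fst (D (w, s))) = p (fst w)"
          using D w that by (simp add: fibrewise_homotopy_def)
        with D_W[OF w that] show ?thesis by (auto simp: topspace_fibre_product)
      qed
      then show ?thesis using that by (simp add: \<gamma>_def)
    qed
  qed
  then show thesis ..
qed

lemma continuous_map_homotopy_join:
  assumes F: "continuous_map (prod_topology X (top_of_set {0..1})) Y F"
    and H: "continuous_map (prod_topology A (top_of_set {0..1})) Y H"
    and r: "continuous_map X A r"
    and \<tau>: "continuous_map X euclideanreal \<tau>" "\<And>x. x \<in> topspace X \<Longrightarrow> 0 \<le> \<tau> x"
    and FH: "\<And>x. \<lbrakk>x \<in> topspace X; \<tau> x \<le> 1\<rbrakk> \<Longrightarrow> F (x, \<tau> x) = H (r x, 0)"
  shows "continuous_map (prod_topology X (top_of_set {0..1})) Y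
    (\<lambda>(x, t). if t \<le> \<tau> x then F (x, t) else H (r x, t - \<tau> x))"
proof -
  let ?Z = "prod_topology X (top_of_set {0..1::real})"
  have c\<tau>: "continuous_map ?Z euclideanreal (\<lambda>z. \<tau> (fst z))"
    using continuous_map_compose[OF continuous_map_fst \<tau>(1)] by (simp add: o_def)
  have "continuous_map ?Z Y (\<lambda>z. if snd z \<le> \<tau> (fst z) then F z else H (r (fst z), snd z - \<tau> (fst z)))"
  proof (rule continuous_map_cases_le[OF continuous_map_into_fulltopology[OF continuous_map_snd] c\<tau>])
    show "continuous_map (subtopology ?Z {z \<in> topspace ?Z. snd z \<le> \<tau> (fst z)}) Y F"
      using F by (rule continuous_map_from_subtopology)
    let ?S = "subtopology ?Z {z \<in> topspace ?Z. \<tau> (fst z) \<le> snd z}"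
    have "continuous_map ?S euclideanreal (\<lambda>z. snd z - \<tau> (fst z))"
      using c\<tau> by (intro continuous_map_from_subtopology continuous_map_diff
          continuous_map_into_fulltopology[OF continuous_map_snd])
    then have "continuous_map ?S (top_of_set {0..1}) (\<lambda>z. snd z - \<tau> (fst z))"
      using \<tau>(2) by (fastforce simp: continuous_map_in_subtopology)
    moreover have "continuous_map ?S A (\<lambda>z. r (fst z))"
      using continuous_map_compose[OF continuous_map_fst r]
      by (intro continuous_map_from_subtopology) (simp add: o_def)
    ultimately have "continuous_map ?S (prod_topology A (top_of_set {0..1}))
        (\<lambda>z. (r (fst z), snd z - \<tau> (fst z)))"
      by (simp add: continuous_map_pairwise o_def)
    from continuous_map_compose[OF this H]
    show "continuous_map ?S Y (\<lambda>z. H (r (fst z), snd z - \<tau> (fst z)))"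
      by (simp add: o_def)
  next
    fix z assume "z \<in> topspace ?Z" "snd z = \<tau> (fst z)"
    then obtain x where "z = (x, \<tau> x)" "x \<in> topspace X" "\<tau> x \<le> 1"
      by (cases z) auto
    then show "F z = H (r (fst z), snd z - \<tau> (fst z))"
      using FH by simp
  qed
  then show ?thesis by (rule continuous_map_eq) auto
qed

lemma fibrewise_cofibration_retracting_homotopy:
  assumes A: "A \<subseteq> topspace X"
    and r: "fibrewise_map X p (subtopology X A) p r" "\<And>a. a \<in> A \<Longrightarrow> r a = a"
    and \<tau>: "continuous_map X euclideanreal \<tau>" "\<And>x. x \<in> topspace X \<Longrightarrow> 0 \<le> \<tau> x" "\<And>a. a \<in> A \<Longrightarrow> \<tau> a = 0"
    and G: "fibrewise_homotopy X p X p G" "\<And>x. x \<in> topspace X \<Longrightarrow> G (x, 0) = x"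
      "\<And>x. \<lbrakk>x \<in> topspace X; \<tau> x \<le> 1\<rbrakk> \<Longrightarrow> G (x, \<tau> x) = r x"
  shows "fibrewise_cofibration TYPE('c) B (subtopology X A) p X p id"
  unfolding fibrewise_cofibration_def
proof (intro conjI allI impI)
  let ?Z = "prod_topology X (top_of_set {0..1::real})"
  have topA: "topspace (subtopology X A) = A" using A by auto
  show "fibrewise_map (subtopology X A) p X p id"
    by (simp add: fibrewise_map_def continuous_map_from_subtopology)
  fix Y :: "'c topology" and q f H
  assume "continuous_map Y B q \<and> fibrewise_map X p Y q f \<and> fibrewise_homotopy (subtopology X A) p Y q H \<and>
    (\<forall>a\<in>topspace (subtopology X A). H (a, 0) = f (id a))"
  then have f: "continuous_map X Y f" "\<And>x. x \<in> topspace X \<Longrightarrow> q (f x) = p x"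
    and H: "continuous_map (prod_topology (subtopology X A) (top_of_set {0..1})) Y H"
      "\<And>a t. \<lbrakk>a \<in> A; t \<in> {0..1}\<rbrakk> \<Longrightarrow> q (H (a, t)) = p a"
    and H_0: "\<And>a. a \<in> A \<Longrightarrow> H (a, 0) = f a"
    using A by (auto simp: fibrewise_map_def fibrewise_homotopy_def)
  have cr: "continuous_map X (subtopology X A) r" and pr: "\<And>x. x \<in> topspace X \<Longrightarrow> p (r x) = p x"
    and rA: "\<And>x. x \<in> topspace X \<Longrightarrow> r x \<in> A"
    using r(1) continuous_map_image_subset_topspace[of X "subtopology X A" r] topA
    by (auto simp: fibrewise_map_def)
  have cG: "continuous_map ?Z X G" and pG: "\<And>x t. \<lbrakk>x \<in> topspace X; t \<in> {0..1}\<rbrakk> \<Longrightarrow> p (G (x, t)) = p x"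
    using G(1) by (auto simp: fibrewise_homotopy_def)
  define K where "K = (\<lambda>(x, t). if t \<le> \<tau> x then f (G (x, t)) else H (r x, t - \<tau> x))"
  have cK: "continuous_map ?Z Y K"
    unfolding K_def
  proof (rule continuous_map_homotopy_join[OF _ H(1) cr \<tau>(1,2)])
    show "continuous_map ?Z Y (\<lambda>z. f (G z))"
      using continuous_map_compose[OF cG f(1)] by (simp add: o_def)
    show "f (G (x, \<tau> x)) = H (r x, 0)" if "x \<in> topspace X" "\<tau> x \<le> 1" for x
      using that G(3) H_0 rA by simp
  qed
  show "\<exists>K. fibrewise_homotopy X p Y q K \<and> (\<forall>x\<in>topspace X. K (x, 0) = f x) \<and>
      (\<forall>a\<in>topspace (subtopology X A). \<forall>t\<in>{0..1}. K (id a, t) = H (a, t))"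
  proof (intro exI conjI ballI)
    show "fibrewise_homotopy X p Y q K"
      unfolding fibrewise_homotopy_def
    proof (intro conjI ballI cK)
      fix x and t :: real assume x: "x \<in> topspace X" and t: "t \<in> {0..1}"
      have "G (x, t) \<in> topspace X"
        using continuous_map_image_subset_topspace[OF cG] x t by force
      moreover have "t - \<tau> x \<in> {0..1}" if "\<tau> x < t"
        using that t \<tau>(2)[OF x] by auto
      ultimately show "q (K (x, t)) = p x"
        using f(2) H(2) pG[OF x t] pr[OF x] rA[OF x] by (simp add: K_def)
    qed
    show "K (x, 0) = f x" if "x \<in> topspace X" for x
      using that \<tau>(2) G(2) by (simp add: K_def)
    show "K (id a, t) = H (a, t)" if "a \<in> topspace (subtopology X A)" "t \<in> {0..1}" for a t
      using that topA \<tau>(3) r(2) G(2) H_0 A by (auto simp: K_def)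
  qed
qed

lemma closedin_idempotent_image:
  assumes "closedin (fibre_product X p) ((\<lambda>x. (x, x)) ` topspace X)"
    and e: "fibrewise_map X p X p e" "\<forall>x\<in>topspace X. e (e x) = e x"
  shows "closedin X (e ` topspace X)"
proof -
  have "e ` topspace X = {x \<in> topspace X. (x, e x) \<in> (\<lambda>x. (x, x)) ` topspace X}"
    using e continuous_map_image_subset_topspace[of X X e] by (force simp: fibrewise_map_def)
  then show ?thesis
    using closedin_continuous_map_preimage[OF continuous_map_graph_fibre_product[OF e(1)] assms(1)]
    by simp
qed

lemma fibrewise_equiconnecting_cofibration_idempotent_image:
  assumes \<gamma>: "fibrewise_equiconnecting X p \<tau> \<gamma>"
    and e: "fibrewise_map X p X p e" "\<forall>x\<in>topspace X. e (e x) = e x"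
  shows "fibrewise_cofibration TYPE('c) B (subtopology X (e ` topspace X)) p X p id"
proof -
  let ?W = "fibre_product X p"
  have graph: "continuous_map X ?W (\<lambda>x. (x, e x))"
    using e(1) by (rule continuous_map_graph_fibre_product)
  have graph_W: "(x, e x) \<in> topspace ?W" if "x \<in> topspace X" for x
    using continuous_map_image_subset_topspace[OF graph] that by auto
  have eX: "e ` topspace X \<subseteq> topspace X"
    using e(1) continuous_map_image_subset_topspace[of X X e] by (simp add: fibrewise_map_def)
  have c\<tau>: "continuous_map ?W euclideanreal \<tau>" and c\<gamma>: "fibrewise_homotopy ?W (\<lambda>w. p (fst w)) X p \<gamma>"
    and \<tau>_diag: "\<And>x. x \<in> topspace X \<Longrightarrow> \<tau> (x, x) = 0"
    and \<gamma>_ends: "\<And>w. w \<in> topspace ?W \<Longrightarrow> 0 \<le> \<tau> w \<and> \<gamma> (w, 0) = fst w \<and> (\<forall>t\<in>{0..1}. \<tau> w \<le> t \<longrightarrow> \<gamma> (w, t) = snd w)"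
    using \<gamma> by (auto simp: fibrewise_equiconnecting_def)
  have "continuous_map (prod_topology X (top_of_set {0..1})) (prod_topology ?W (top_of_set {0..1::real}))
      (\<lambda>(x, t). ((x, e x), t))"
    using continuous_map_compose[OF continuous_map_fst graph]
    by (simp add: continuous_map_pairwise o_def case_prod_unfold continuous_map_snd)
  then have G: "fibrewise_homotopy X p X p (\<lambda>(x, t). \<gamma> ((x, e x), t))"
    using c\<gamma> continuous_map_compose graph_W
    by (fastforce simp: fibrewise_homotopy_def o_def case_prod_unfold)
  show ?thesis
  proof (rule fibrewise_cofibration_retracting_homotopy[OF eX _ _ _ _ _ G])
    show "fibrewise_map X p (subtopology X (e ` topspace X)) p e"
      using e(1) by (auto simp: fibrewise_map_def continuous_map_in_subtopology)
    show "continuous_map X euclideanreal (\<lambda>x. \<tau> (x, e x))"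
      using continuous_map_compose[OF graph c\<tau>] by (simp add: o_def)
  qed (use e(2) eX \<tau>_diag \<gamma>_ends graph_W in \<open>auto simp: image_subset_iff\<close>)
qed

theorem corollary4p7:
  fixes B :: "'b topology" and X :: "'a topology" and p :: "'a \<Rightarrow> 'b" and e :: "'a \<Rightarrow> 'a"
  assumes "continuous_map X B p"
    and "fibrewise_LEC B X p"
    and "fibrewise_map X p X p e"
    and "\<forall>x\<in>topspace X. e (e x) = e x"
  shows "closed_fibrewise_cofibration TYPE('c) B (subtopology X (e ` topspace X)) p X p id"
proof -
  have cof: "fibrewise_cofibration TYPE(('a \<times> 'a) \<times> real) B X p (fibre_product X p) (\<lambda>w. p (fst w)) (\<lambda>x. (x, x))"
    and diag: "closedin (fibre_product X p) ((\<lambda>x. (x, x)) ` topspace X)"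
    using assms(2) by (simp_all add: fibrewise_LEC_def closed_fibrewise_cofibration_def)
  have "continuous_map (fibre_product X p) B (\<lambda>w. p (fst w))"
    using continuous_map_compose[OF continuous_map_fibre_product_fst assms(1)] by (simp add: o_def)
  then obtain u D where "fibrewise_strom_structure (fibre_product X p) (\<lambda>w. p (fst w)) ((\<lambda>x. (x, x)) ` topspace X) u D"
    using closed_fibrewise_cofibration_strom_structure[OF cof _ diag] by blast
  then obtain \<tau> \<gamma> where "fibrewise_equiconnecting X p \<tau> \<gamma>"
    by (rule fibrewise_strom_structure_diagonal_equiconnecting)
  moreover have "e ` topspace X \<subseteq> topspace X"
    using assms(3) continuous_map_image_subset_topspace[of X X e] by (simp add: fibrewise_map_def)
  ultimately show ?thesis
    using fibrewise_equiconnecting_cofibration_idempotent_image[OF _ assms(3,4)]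
      closedin_idempotent_image[OF diag assms(3,4)]
    by (simp add: closed_fibrewise_cofibration_def embedding_map_def Int_absorb1)
qed
end
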